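(* Let $V$ be a quasi-regular mixed lattice vector space and let $\mathcal{R}(V)$ be the set of all regular quasi-ideals of $V$, ordered by inclusion. Then $\mathcal{R}(V)$ is a distributive lattice in which $A\vee B=A+B$ and $A\wedge B=A\cap B$. Moreover, $\mathcal{R}(V)$ has smallest element $\{0\}$ and largest element $V_{sp}-V_{sp}$.
   Context: A mixed lattice vector space is a real vector space $V$ with two partial orderings $\le$ (initial) and $\preceq$ (specific), each compatible with the vector space structure, such that for all $x,y$ the mixed lower envelope $x\curlywedge y=\max\{w: w\preceq x,\ w\le y\}$ and mixed upper envelope $x\curlyvee y=\min\{w: x\preceq w,\ y\le w\}$ exist (max/min with respect to $\le$). $V_{sp}=\{x:0\preceq x\}$, $E_{sp}=E\cap V_{sp}$. $V$ is quasi-regular if $V_{sp}$ is closed under $\curlywedge,\curlyvee$. A mixed lattice subspace is a linear subspace closed under $\curlywedge,\curlyvee$. A subspace $S$ is regular if $S=S_{sp}-S_{sp}$. A quasi-ideal is a mixed lattice subspace $A$ such that $y\in A$ and $0\preceq x\le y$ imply $x\in A$. *)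

theory Defs
  imports Main "HOL.Real_Vector_Spaces"
begin

text \<open>Orders are given as relations on a real vector space: le is the initial order,
  sle the specific order.\<close>

definition partial_order_rel :: "('a \<Rightarrow> 'a \<Rightarrow> bool) \<Rightarrow> bool" where
  "partial_order_rel r \<longleftrightarrow> (\<forall>x. r x x) \<and> (\<forall>x y. r x y \<and> r y x \<longrightarrow> x = y)
     \<and> (\<forall>x y z. r x y \<and> r y z \<longrightarrow> r x z)"

definition vs_compatible :: "('a::real_vector \<Rightarrow> 'a \<Rightarrow> bool) \<Rightarrow> bool" where
  "vs_compatible r \<longleftrightarrow> (\<forall>x y z. r x y \<longrightarrow> r (x + z) (y + z))
     \<and> (\<forall>x y (c::real). r x y \<and> 0 \<le> c \<longrightarrow> r (c *\<^sub>R x) (c *\<^sub>R y))"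

definition mlow_set :: "('a \<Rightarrow> 'a \<Rightarrow> bool) \<Rightarrow> ('a \<Rightarrow> 'a \<Rightarrow> bool) \<Rightarrow> 'a \<Rightarrow> 'a \<Rightarrow> 'a set" where
  "mlow_set le sle x y = {w. sle w x \<and> le w y}"

definition mup_set :: "('a \<Rightarrow> 'a \<Rightarrow> bool) \<Rightarrow> ('a \<Rightarrow> 'a \<Rightarrow> bool) \<Rightarrow> 'a \<Rightarrow> 'a \<Rightarrow> 'a set" where
  "mup_set le sle x y = {w. sle x w \<and> le y w}"

definition mlow :: "('a \<Rightarrow> 'a \<Rightarrow> bool) \<Rightarrow> ('a \<Rightarrow> 'a \<Rightarrow> bool) \<Rightarrow> 'a \<Rightarrow> 'a \<Rightarrow> 'a" where
  "mlow le sle x y = (THE w. w \<in> mlow_set le sle x y \<and> (\<forall>v \<in> mlow_set le sle x y. le v w))"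

definition mup :: "('a \<Rightarrow> 'a \<Rightarrow> bool) \<Rightarrow> ('a \<Rightarrow> 'a \<Rightarrow> bool) \<Rightarrow> 'a \<Rightarrow> 'a \<Rightarrow> 'a" where
  "mup le sle x y = (THE w. w \<in> mup_set le sle x y \<and> (\<forall>v \<in> mup_set le sle x y. le w v))"

definition mixed_lattice_vs :: "('a::real_vector \<Rightarrow> 'a \<Rightarrow> bool) \<Rightarrow> ('a \<Rightarrow> 'a \<Rightarrow> bool) \<Rightarrow> bool" where
  "mixed_lattice_vs le sle \<longleftrightarrow>
     partial_order_rel le \<and> partial_order_rel sle \<and> vs_compatible le \<and> vs_compatible sle
     \<and> (\<forall>x y. \<exists>w. w \<in> mlow_set le sle x y \<and> (\<forall>v \<in> mlow_set le sle x y. le v w))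
     \<and> (\<forall>x y. \<exists>w. w \<in> mup_set le sle x y \<and> (\<forall>v \<in> mup_set le sle x y. le w v))"

definition Vsp :: "('a::real_vector \<Rightarrow> 'a \<Rightarrow> bool) \<Rightarrow> 'a set" where
  "Vsp sle = {x. sle 0 x}"

definition quasi_regular :: "('a::real_vector \<Rightarrow> 'a \<Rightarrow> bool) \<Rightarrow> ('a \<Rightarrow> 'a \<Rightarrow> bool) \<Rightarrow> bool" where
  "quasi_regular le sle \<longleftrightarrow>
     (\<forall>x \<in> Vsp sle. \<forall>y \<in> Vsp sle. mlow le sle x y \<in> Vsp sle \<and> mup le sle x y \<in> Vsp sle)"

definition set_sum :: "'a::plus set \<Rightarrow> 'a set \<Rightarrow> 'a set" where
  "set_sum A B = {a + b | a b. a \<in> A \<and> b \<in> B}"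

definition set_diff :: "'a::minus set \<Rightarrow> 'a set \<Rightarrow> 'a set" where
  "set_diff A B = {a - b | a b. a \<in> A \<and> b \<in> B}"

definition mixed_lattice_subspace :: "('a::real_vector \<Rightarrow> 'a \<Rightarrow> bool) \<Rightarrow> ('a \<Rightarrow> 'a \<Rightarrow> bool) \<Rightarrow> 'a set \<Rightarrow> bool" where
  "mixed_lattice_subspace le sle S \<longleftrightarrow> subspace S
     \<and> (\<forall>x \<in> S. \<forall>y \<in> S. mlow le sle x y \<in> S \<and> mup le sle x y \<in> S)"

definition regular_subspace :: "('a::real_vector \<Rightarrow> 'a \<Rightarrow> bool) \<Rightarrow> 'a set \<Rightarrow> bool" where
  "regular_subspace sle S \<longleftrightarrow> S = set_diff (S \<inter> Vsp sle) (S \<inter> Vsp sle)"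

definition quasi_ideal :: "('a::real_vector \<Rightarrow> 'a \<Rightarrow> bool) \<Rightarrow> ('a \<Rightarrow> 'a \<Rightarrow> bool) \<Rightarrow> 'a set \<Rightarrow> bool" where
  "quasi_ideal le sle A \<longleftrightarrow> mixed_lattice_subspace le sle A
     \<and> (\<forall>x y. y \<in> A \<and> sle 0 x \<and> le x y \<longrightarrow> x \<in> A)"

definition regular_quasi_ideals :: "('a::real_vector \<Rightarrow> 'a \<Rightarrow> bool) \<Rightarrow> ('a \<Rightarrow> 'a \<Rightarrow> bool) \<Rightarrow> 'a set set" where
  "regular_quasi_ideals le sle = {A. quasi_ideal le sle A \<and> regular_subspace sle A}"

end

theory Submission
  imports Defs
begin

text \<open>Quasi-regularity makes \<open>\<preceq>\<close> stronger than \<open>\<le>\<close>, and the envelopes commute with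
  translations. Together these give a Riesz-type decomposition: if \<open>0 \<preceq> u \<le> b + c\<close> with
  \<open>0 \<preceq> b, c\<close>, then \<open>p = u \<curlywedge> b\<close> splits \<open>u = p + (u - p)\<close> into \<open>\<preceq>\<close>-positive parts below
  \<open>b\<close> and \<open>c\<close>. This makes \<open>A + B\<close> solid and gives distributivity, because a positive element
  of \<open>A \<inter> (B + C)\<close> splits into positive parts of \<open>B\<close> and \<open>C\<close> below it. \<open>A \<inter> B\<close> is regular
  because \<open>x = a\<^sub>1 - a\<^sub>2 = b\<^sub>1 - b\<^sub>2\<close> gives \<open>x = (a\<^sub>1 \<curlywedge> b\<^sub>1) - (a\<^sub>2 \<curlywedge> b\<^sub>2)\<close>. Finally, a regular
  solid subspace is closed under the envelopes, since two of its elements can be translated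
  into \<open>V\<^sub>s\<^sub>p\<close> together.\<close>

lemma subspace_set_sum: "subspace A \<Longrightarrow> subspace B \<Longrightarrow> subspace (set_sum A B)"
  unfolding set_sum_def by (rule subspace_sums)

lemma set_sum_upper1: "subspace B \<Longrightarrow> A \<subseteq> set_sum A B"
  unfolding set_sum_def by (force dest: subspace_0)

lemma set_sum_upper2: "subspace A \<Longrightarrow> B \<subseteq> set_sum A B"
  unfolding set_sum_def by (force dest: subspace_0)

lemma set_sum_least: "subspace C \<Longrightarrow> A \<subseteq> C \<Longrightarrow> B \<subseteq> C \<Longrightarrow> set_sum A B \<subseteq> C"
  unfolding set_sum_def by (auto intro: subspace_add)

lemma set_sum_mono: "A \<subseteq> A' \<Longrightarrow> B \<subseteq> B' \<Longrightarrow> set_sum A B \<subseteq> set_sum A' B'"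
  unfolding set_sum_def by blast

lemma regular_subspaceI:
  assumes "subspace S" and "\<And>x. x \<in> S \<Longrightarrow> \<exists>a b. x = a - b \<and> a \<in> S \<inter> Vsp sle \<and> b \<in> S \<inter> Vsp sle"
  shows "regular_subspace sle S"
  using assms unfolding regular_subspace_def set_diff_def by (auto intro: subspace_diff)

lemma regular_subspaceE:
  assumes "regular_subspace sle S" and "x \<in> S"
  obtains a b where "x = a - b" "a \<in> S" "a \<in> Vsp sle" "b \<in> S" "b \<in> Vsp sle"
  using assms unfolding regular_subspace_def set_diff_def by blast

lemma regular_subspace_subset_Vsp_diff:
  "regular_subspace sle S \<Longrightarrow> S \<subseteq> set_diff (Vsp sle) (Vsp sle)"
  unfolding set_diff_def by (blast elim: regular_subspaceE)

locale mixed_lattice_space =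
  fixes le sle :: "'a::real_vector \<Rightarrow> 'a \<Rightarrow> bool"
  assumes mixed_lattice: "mixed_lattice_vs le sle"
begin

lemma le_refl: "le x x"
  and le_antisym: "le x y \<Longrightarrow> le y x \<Longrightarrow> x = y"
  and le_trans: "le x y \<Longrightarrow> le y z \<Longrightarrow> le x z"
  and sle_refl: "sle x x"
  and sle_antisym: "sle x y \<Longrightarrow> sle y x \<Longrightarrow> x = y"
  and sle_trans: "sle x y \<Longrightarrow> sle y z \<Longrightarrow> sle x z"
  using mixed_lattice unfolding mixed_lattice_vs_def partial_order_rel_def by blast+

lemma le_add_right: "le x y \<Longrightarrow> le (x + z) (y + z)"
  and sle_add_right: "sle x y \<Longrightarrow> sle (x + z) (y + z)"
  and sle_scaleR: "sle x y \<Longrightarrow> 0 \<le> c \<Longrightarrow> sle (c *\<^sub>R x) (c *\<^sub>R y)"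
  using mixed_lattice unfolding mixed_lattice_vs_def vs_compatible_def by blast+

lemma le_add_right_iff: "le (x + z) (y + z) \<longleftrightarrow> le x y"
  using le_add_right[of "x + z" "y + z" "- z"] le_add_right by auto

lemma sle_add_right_iff: "sle (x + z) (y + z) \<longleftrightarrow> sle x y"
  using sle_add_right[of "x + z" "y + z" "- z"] sle_add_right by auto

lemma le_iff_diff_nonneg: "le x y \<longleftrightarrow> le 0 (y - x)"
  using le_add_right_iff[of x "- x" y] by simp

lemma sle_iff_diff_nonneg: "sle x y \<longleftrightarrow> sle 0 (y - x)"
  using sle_add_right_iff[of x "- x" y] by simp

lemma mem_Vsp_iff: "x \<in> Vsp sle \<longleftrightarrow> sle 0 x"
  unfolding Vsp_def by simp

lemma Vsp_add: "x \<in> Vsp sle \<Longrightarrow> y \<in> Vsp sle \<Longrightarrow> x + y \<in> Vsp sle"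
  unfolding mem_Vsp_iff using sle_add_right[of 0 x y] sle_trans by (simp add: add.commute)

lemma Vsp_scaleR: "x \<in> Vsp sle \<Longrightarrow> 0 \<le> c \<Longrightarrow> c *\<^sub>R x \<in> Vsp sle"
  unfolding mem_Vsp_iff using sle_scaleR[of 0 x c] by simp

lemma subspace_Vsp_diff: "subspace (set_diff (Vsp sle) (Vsp sle))"
  unfolding subspace_def
proof (intro conjI ballI allI)
  show "0 \<in> set_diff (Vsp sle) (Vsp sle)"
    unfolding set_diff_def mem_Vsp_iff using sle_refl by force
next
  fix x y assume "x \<in> set_diff (Vsp sle) (Vsp sle)" "y \<in> set_diff (Vsp sle) (Vsp sle)"
  then obtain x1 x2 y1 y2 where "x = x1 - x2" "y = y1 - y2"
    and "x1 \<in> Vsp sle" "x2 \<in> Vsp sle" "y1 \<in> Vsp sle" "y2 \<in> Vsp sle"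
    unfolding set_diff_def by blast
  moreover have "x + y = (x1 + y1) - (x2 + y2)" using calculation by simp
  ultimately show "x + y \<in> set_diff (Vsp sle) (Vsp sle)"
    unfolding set_diff_def using Vsp_add by blast
next
  fix c :: real and x assume "x \<in> set_diff (Vsp sle) (Vsp sle)"
  then obtain x1 x2 where x: "x = x1 - x2" "x1 \<in> Vsp sle" "x2 \<in> Vsp sle"
    unfolding set_diff_def by blast
  show "c *\<^sub>R x \<in> set_diff (Vsp sle) (Vsp sle)"
  proof (cases "0 \<le> c")
    case True
    then have "c *\<^sub>R x = c *\<^sub>R x1 - c *\<^sub>R x2" by (simp add: x(1) algebra_simps)
    then show ?thesis unfolding set_diff_def using True x Vsp_scaleR by blast
  next
    case False
    then have "c *\<^sub>R x = (- c) *\<^sub>R x2 - (- c) *\<^sub>R x1" by (simp add: x(1) algebra_simps)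
    moreover have "(- c) *\<^sub>R x2 \<in> Vsp sle" "(- c) *\<^sub>R x1 \<in> Vsp sle"
      using False x by (simp_all add: Vsp_scaleR del: scaleR_minus_left)
    ultimately show ?thesis unfolding set_diff_def by blast
  qed
qed

lemma mlow_eqI:
  assumes "sle m x" "le m y" "\<And>v. sle v x \<Longrightarrow> le v y \<Longrightarrow> le v m"
  shows "mlow le sle x y = m"
  unfolding mlow_def mlow_set_def using assms by (blast intro: the_equality le_antisym)

lemma mup_eqI:
  assumes "sle x m" "le y m" "\<And>v. sle x v \<Longrightarrow> le y v \<Longrightarrow> le m v"
  shows "mup le sle x y = m"
  unfolding mup_def mup_set_def using assms by (blast intro: the_equality le_antisym)

lemma mlow_sle: "sle (mlow le sle x y) x"
  and mlow_le: "le (mlow le sle x y) y"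
  and mlow_greatest: "sle v x \<Longrightarrow> le v y \<Longrightarrow> le v (mlow le sle x y)"
proof -
  obtain m where "m \<in> mlow_set le sle x y" "\<forall>v \<in> mlow_set le sle x y. le v m"
    using mixed_lattice unfolding mixed_lattice_vs_def by blast
  moreover from this have "mlow le sle x y = m"
    by (intro mlow_eqI) (auto simp: mlow_set_def)
  ultimately show "sle (mlow le sle x y) x" "le (mlow le sle x y) y"
    and "sle v x \<Longrightarrow> le v y \<Longrightarrow> le v (mlow le sle x y)"
    by (auto simp: mlow_set_def)
qed

lemma mup_sle: "sle x (mup le sle x y)"
  and mup_le: "le y (mup le sle x y)"
  and mup_least: "sle x v \<Longrightarrow> le y v \<Longrightarrow> le (mup le sle x y) v"
proof -
  obtain m where "m \<in> mup_set le sle x y" "\<forall>v \<in> mup_set le sle x y. le m v"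
    using mixed_lattice unfolding mixed_lattice_vs_def by blast
  moreover from this have "mup le sle x y = m"
    by (intro mup_eqI) (auto simp: mup_set_def)
  ultimately show "sle x (mup le sle x y)" "le y (mup le sle x y)"
    and "sle x v \<Longrightarrow> le y v \<Longrightarrow> le (mup le sle x y) v"
    by (auto simp: mup_set_def)
qed

lemma mlow_add_right: "mlow le sle (x + c) (y + c) = mlow le sle x y + c"
proof (rule mlow_eqI)
  fix v assume "sle v (x + c)" "le v (y + c)"
  then have "le (v - c) (mlow le sle x y)"
    using mlow_greatest sle_add_right_iff[of "v - c" c] le_add_right_iff[of "v - c" c] by simp
  then show "le v (mlow le sle x y + c)"
    using le_add_right_iff[of "v - c" c] by simp
qed (simp_all add: sle_add_right_iff le_add_right_iff mlow_sle mlow_le)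

lemma mup_add_right: "mup le sle (x + c) (y + c) = mup le sle x y + c"
proof (rule mup_eqI)
  fix v assume "sle (x + c) v" "le (y + c) v"
  then have "le (mup le sle x y) (v - c)"
    using mup_least sle_add_right_iff[of _ c "v - c"] le_add_right_iff[of _ c "v - c"] by simp
  then show "le (mup le sle x y + c) v"
    using le_add_right_iff[of _ c "v - c"] by simp
qed (simp_all add: sle_add_right_iff le_add_right_iff mup_sle mup_le)

end

locale quasi_regular_mixed_lattice_space = mixed_lattice_space +
  assumes quasi_regular: "quasi_regular le sle"
begin

lemma mlow_Vsp: "x \<in> Vsp sle \<Longrightarrow> y \<in> Vsp sle \<Longrightarrow> mlow le sle x y \<in> Vsp sle"
  and mup_Vsp: "x \<in> Vsp sle \<Longrightarrow> y \<in> Vsp sle \<Longrightarrow> mup le sle x y \<in> Vsp sle"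
  using quasi_regular unfolding quasi_regular_def by blast+

text \<open>For \<open>0 \<preceq> e\<close> the envelope \<open>0 \<curlywedge> e \<le> e\<close> lies in \<open>V\<^sub>s\<^sub>p\<close> and \<open>\<preceq> 0\<close>, hence equals \<open>0\<close>.\<close>

lemma sle_imp_le: "sle x y \<Longrightarrow> le x y"
proof -
  have "le 0 e" if "sle 0 e" for e
  proof -
    have "mlow le sle 0 e \<in> Vsp sle"
      using that mlow_Vsp sle_refl mem_Vsp_iff by blast
    then have "mlow le sle 0 e = 0"
      using mlow_sle[of 0 e] sle_antisym mem_Vsp_iff by blast
    then show ?thesis using mlow_le[of 0 e] by simp
  qed
  then show "sle x y \<Longrightarrow> le x y" using sle_iff_diff_nonneg le_iff_diff_nonneg by blast
qed

lemma le_add_Vsp: "y \<in> Vsp sle \<Longrightarrow> le x (x + y)"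
  using sle_imp_le[of 0 y] le_add_right[of 0 y x] by (simp add: mem_Vsp_iff add.commute)

lemma riesz_decomposition:
  assumes u: "u \<in> Vsp sle" and b: "b \<in> Vsp sle" and c: "c \<in> Vsp sle"
    and u_le: "le u (b + c)"
  obtains p q where "u = p + q" "p \<in> Vsp sle" "q \<in> Vsp sle" "le p b" "le q c"
proof
  let ?p = "mlow le sle u b"
  show "u = ?p + (u - ?p)" by simp
  show "?p \<in> Vsp sle" using mlow_Vsp u b by blast
  show "u - ?p \<in> Vsp sle" using mlow_sle sle_iff_diff_nonneg mem_Vsp_iff by blast
  show "le ?p b" by (rule mlow_le)
  have "sle (u - c) u" "le (u - c) b"
    using c u_le sle_add_right_iff[of 0 "u - c" c] le_add_right_iff[of u "- c" "b + c"]
    by (simp_all add: mem_Vsp_iff)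
  then have "le (u - c) ?p" by (rule mlow_greatest)
  then show "le (u - ?p) c"
    using le_iff_diff_nonneg[of "u - c" ?p] le_iff_diff_nonneg[of "u - ?p" c]
    by (simp add: algebra_simps)
qed

definition solid :: "'a set \<Rightarrow> bool" where
  "solid A \<longleftrightarrow> (\<forall>x y. y \<in> A \<and> sle 0 x \<and> le x y \<longrightarrow> x \<in> A)"

lemma solidD: "solid A \<Longrightarrow> y \<in> A \<Longrightarrow> x \<in> Vsp sle \<Longrightarrow> le x y \<Longrightarrow> x \<in> A"
  unfolding solid_def mem_Vsp_iff by blast

lemma solid_envelopes_Vsp:
  assumes "solid A" "subspace A" "x \<in> A" "y \<in> A" "x \<in> Vsp sle" "y \<in> Vsp sle"
  shows "mlow le sle x y \<in> A" "mup le sle x y \<in> A"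
proof -
  show "mlow le sle x y \<in> A"
    using assms mlow_Vsp mlow_le by (blast intro: solidD)
  have "sle x (x + y)" using assms(6) sle_add_right[of 0 y x] by (simp add: mem_Vsp_iff add.commute)
  moreover have "le y (x + y)" using assms(5) le_add_Vsp[of x y] by (simp add: add.commute)
  ultimately have "le (mup le sle x y) (x + y)" by (rule mup_least)
  then show "mup le sle x y \<in> A"
    using assms mup_Vsp by (blast intro: solidD subspace_add)
qed

lemma quasi_ideal_if_regular_solid:
  assumes A: "subspace A" "regular_subspace sle A" "solid A"
  shows "quasi_ideal le sle A"
  unfolding quasi_ideal_def mixed_lattice_subspace_def
proof (intro conjI ballI)
  fix x y assume "x \<in> A" "y \<in> A"
  then obtain x1 x2 y1 y2 where x: "x = x1 - x2" "x1 \<in> A" "x1 \<in> Vsp sle" "x2 \<in> A" "x2 \<in> Vsp sle"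
    and y: "y = y1 - y2" "y1 \<in> A" "y1 \<in> Vsp sle" "y2 \<in> A" "y2 \<in> Vsp sle"
    using A(2) by (metis regular_subspaceE)
  define c where "c = x2 + y2"
  have "c \<in> A" using x y A(1) by (simp add: c_def subspace_add)
  have xc: "x + c = x1 + y2" and yc: "y + c = y1 + x2" by (simp_all add: x(1) y(1) c_def)
  have "x + c \<in> A" "y + c \<in> A" "x + c \<in> Vsp sle" "y + c \<in> Vsp sle"
    unfolding xc yc using x y A(1) by (simp_all add: subspace_add Vsp_add)
  then have "mlow le sle x y + c \<in> A" "mup le sle x y + c \<in> A"
    using solid_envelopes_Vsp[OF A(3,1)] mlow_add_right mup_add_right by metis+
  with \<open>c \<in> A\<close> show "mlow le sle x y \<in> A" "mup le sle x y \<in> A"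
    using A(1) by (metis add_diff_cancel subspace_diff)+
qed (use A in \<open>auto simp: solid_def\<close>)

lemma regular_quasi_ideals_iff:
  "A \<in> regular_quasi_ideals le sle \<longleftrightarrow> subspace A \<and> regular_subspace sle A \<and> solid A"
  unfolding regular_quasi_ideals_def
  using quasi_ideal_if_regular_solid
  by (auto simp: quasi_ideal_def mixed_lattice_subspace_def solid_def)

lemma set_sum_split_Vsp:
  assumes A: "A \<in> regular_quasi_ideals le sle" and B: "B \<in> regular_quasi_ideals le sle"
    and x: "x \<in> Vsp sle" and y: "y \<in> set_sum A B" and "le x y"
  obtains a b where "x = a + b" "a \<in> A" "b \<in> B" "a \<in> Vsp sle" "b \<in> Vsp sle" "le a x" "le b x"
proof -
  have "regular_subspace sle A" "regular_subspace sle B" "solid A" "solid B"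
    using A B by (simp_all add: regular_quasi_ideals_iff)
  obtain a b where "y = a + b" "a \<in> A" "b \<in> B" using y unfolding set_sum_def by blast
  then obtain a1 a2 b1 b2 where a: "a = a1 - a2" "a1 \<in> A" "a1 \<in> Vsp sle" "a2 \<in> Vsp sle"
    and b: "b = b1 - b2" "b1 \<in> B" "b1 \<in> Vsp sle" "b2 \<in> Vsp sle"
    using \<open>regular_subspace sle A\<close> \<open>regular_subspace sle B\<close> by (metis regular_subspaceE)
  have "a1 + b1 = y + (a2 + b2)" by (simp add: \<open>y = a + b\<close> a(1) b(1))
  then have "le y (a1 + b1)" using a b Vsp_add le_add_Vsp by metis
  then have "le x (a1 + b1)" using \<open>le x y\<close> le_trans by blast
  then obtain p q where pq: "x = p + q" "p \<in> Vsp sle" "q \<in> Vsp sle" "le p a1" "le q b1"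
    using riesz_decomposition x a(3) b(3) by blast
  show thesis
  proof
    show "p \<in> A" "q \<in> B" using pq a b \<open>solid A\<close> \<open>solid B\<close> by (blast intro: solidD)+
    show "le p x" "le q x" using pq le_add_Vsp[of q p] le_add_Vsp[of p q] by (simp_all add: add.commute)
  qed (use pq in simp_all)
qed

lemma set_sum_regular_quasi_ideal:
  assumes A: "A \<in> regular_quasi_ideals le sle" and B: "B \<in> regular_quasi_ideals le sle"
  shows "set_sum A B \<in> regular_quasi_ideals le sle"
  unfolding regular_quasi_ideals_iff
proof (intro conjI)
  have "subspace A" "subspace B" "regular_subspace sle A" "regular_subspace sle B"
    using A B by (simp_all add: regular_quasi_ideals_iff)
  then show "subspace (set_sum A B)" by (simp add: subspace_set_sum)
  show "regular_subspace sle (set_sum A B)"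
  proof (rule regular_subspaceI)
    show "subspace (set_sum A B)" by fact
    fix y assume "y \<in> set_sum A B"
    then obtain a b where "y = a + b" "a \<in> A" "b \<in> B" unfolding set_sum_def by blast
    then obtain a1 a2 b1 b2 where a: "a = a1 - a2" "a1 \<in> A" "a1 \<in> Vsp sle" "a2 \<in> A" "a2 \<in> Vsp sle"
      and b: "b = b1 - b2" "b1 \<in> B" "b1 \<in> Vsp sle" "b2 \<in> B" "b2 \<in> Vsp sle"
      using \<open>regular_subspace sle A\<close> \<open>regular_subspace sle B\<close> by (metis regular_subspaceE)
    have "y = (a1 + b1) - (a2 + b2)" by (simp add: \<open>y = a + b\<close> a(1) b(1))
    moreover have "a1 + b1 \<in> set_sum A B" "a2 + b2 \<in> set_sum A B"
      using a b unfolding set_sum_def by blast+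
    ultimately show "\<exists>u v. y = u - v \<and> u \<in> set_sum A B \<inter> Vsp sle \<and> v \<in> set_sum A B \<inter> Vsp sle"
      using a b Vsp_add by blast
  qed
  show "solid (set_sum A B)"
    unfolding solid_def
  proof (intro allI impI)
    fix x y assume "y \<in> set_sum A B \<and> sle 0 x \<and> le x y"
    then obtain a b where "x = a + b" "a \<in> A" "b \<in> B"
      using set_sum_split_Vsp[OF A B] mem_Vsp_iff by metis
    then show "x \<in> set_sum A B" unfolding set_sum_def by blast
  qed
qed

lemma Int_regular_quasi_ideal:
  assumes A: "A \<in> regular_quasi_ideals le sle" and B: "B \<in> regular_quasi_ideals le sle"
  shows "A \<inter> B \<in> regular_quasi_ideals le sle"
  unfolding regular_quasi_ideals_iff
proof (intro conjI)
  have "subspace A" "subspace B" "regular_subspace sle A" "regular_subspace sle B" "solid A" "solid B"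
    using A B by (simp_all add: regular_quasi_ideals_iff)
  then show "subspace (A \<inter> B)" "solid (A \<inter> B)"
    by (simp add: subspace_inter, auto simp: solid_def)
  show "regular_subspace sle (A \<inter> B)"
  proof (rule regular_subspaceI)
    show "subspace (A \<inter> B)" by fact
    fix x assume "x \<in> A \<inter> B"
    obtain a1 a2 where a: "x = a1 - a2" "a1 \<in> A" "a1 \<in> Vsp sle" "a2 \<in> A" "a2 \<in> Vsp sle"
      using \<open>regular_subspace sle A\<close> \<open>x \<in> A \<inter> B\<close> by (blast elim: regular_subspaceE)
    obtain b1 b2 where b: "x = b1 - b2" "b1 \<in> B" "b1 \<in> Vsp sle" "b2 \<in> B" "b2 \<in> Vsp sle"
      using \<open>regular_subspace sle B\<close> \<open>x \<in> A \<inter> B\<close> by (blast elim: regular_subspaceE)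
    have "a1 + - x = a2" using a(1) by simp
    moreover have "b1 + - x = b2" using b(1) by simp
    ultimately have "mlow le sle a2 b2 = mlow le sle a1 b1 + - x"
      using mlow_add_right[of a1 "- x" b1] by metis
    then have "x = mlow le sle a1 b1 - mlow le sle a2 b2" by simp
    moreover have "mlow le sle u v \<in> A \<inter> B \<inter> Vsp sle"
      if "u \<in> A" "u \<in> Vsp sle" "v \<in> B" "v \<in> Vsp sle" for u v
      using that \<open>solid A\<close> \<open>solid B\<close> mlow_Vsp mlow_le sle_imp_le[OF mlow_sle]
      by (blast intro: solidD)
    ultimately show "\<exists>u v. x = u - v \<and> u \<in> A \<inter> B \<inter> Vsp sle \<and> v \<in> A \<inter> B \<inter> Vsp sle"
      using a b by blast
  qed
qed

lemma regular_quasi_ideals_distrib: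
  assumes A: "A \<in> regular_quasi_ideals le sle" and B: "B \<in> regular_quasi_ideals le sle"
    and C: "C \<in> regular_quasi_ideals le sle"
  shows "A \<inter> set_sum B C = set_sum (A \<inter> B) (A \<inter> C)"
proof
  have "subspace A" "solid A" using A by (simp_all add: regular_quasi_ideals_iff)
  have "subspace B" "subspace C" using B C by (simp_all add: regular_quasi_ideals_iff)
  show "set_sum (A \<inter> B) (A \<inter> C) \<subseteq> A \<inter> set_sum B C"
    using set_sum_least[OF \<open>subspace A\<close>] set_sum_mono[of "A \<inter> B" B "A \<inter> C" C] by blast
  have D: "A \<inter> set_sum B C \<in> regular_quasi_ideals le sle"
    using A B C by (simp add: Int_regular_quasi_ideal set_sum_regular_quasi_ideal)
  have Vsp_part: "u \<in> set_sum (A \<inter> B) (A \<inter> C)" if u: "u \<in> A \<inter> set_sum B C" "u \<in> Vsp sle" for u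
  proof -
    obtain b c where "u = b + c" "b \<in> B" "c \<in> C" "b \<in> Vsp sle" "c \<in> Vsp sle" "le b u" "le c u"
      using set_sum_split_Vsp[OF B C u(2)] u(1) le_refl by blast
    moreover from this have "b \<in> A" "c \<in> A"
      using u(1) \<open>solid A\<close> by (blast intro: solidD)+
    ultimately show ?thesis unfolding set_sum_def by blast
  qed
  show "A \<inter> set_sum B C \<subseteq> set_sum (A \<inter> B) (A \<inter> C)"
  proof
    fix x assume "x \<in> A \<inter> set_sum B C"
    then obtain u v where "x = u - v" "u \<in> A \<inter> set_sum B C" "u \<in> Vsp sle"
      "v \<in> A \<inter> set_sum B C" "v \<in> Vsp sle"
      using D by (metis regular_quasi_ideals_iff regular_subspaceE)
    moreover have "subspace (set_sum (A \<inter> B) (A \<inter> C))"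
      using \<open>subspace A\<close> \<open>subspace B\<close> \<open>subspace C\<close> by (simp add: subspace_set_sum subspace_inter)
    ultimately show "x \<in> set_sum (A \<inter> B) (A \<inter> C)"
      using Vsp_part subspace_diff by metis
  qed
qed

lemma zero_regular_quasi_ideal: "{0} \<in> regular_quasi_ideals le sle"
  unfolding regular_quasi_ideals_iff
proof (intro conjI)
  show "regular_subspace sle {0}"
    by (rule regular_subspaceI) (auto simp: mem_Vsp_iff sle_refl)
  show "solid {0}"
    unfolding solid_def using sle_imp_le le_antisym by blast
qed simp

lemma Vsp_subset_Vsp_diff: "Vsp sle \<subseteq> set_diff (Vsp sle) (Vsp sle)"
  unfolding set_diff_def using sle_refl mem_Vsp_iff by force

lemma Vsp_diff_regular_quasi_ideal: "set_diff (Vsp sle) (Vsp sle) \<in> regular_quasi_ideals le sle"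
  unfolding regular_quasi_ideals_iff
proof (intro conjI)
  show "subspace (set_diff (Vsp sle) (Vsp sle))" by (rule subspace_Vsp_diff)
  then show "regular_subspace sle (set_diff (Vsp sle) (Vsp sle))"
  proof (rule regular_subspaceI)
    fix x assume "x \<in> set_diff (Vsp sle) (Vsp sle)"
    then obtain a b where "x = a - b" "a \<in> Vsp sle" "b \<in> Vsp sle" unfolding set_diff_def by blast
    then show "\<exists>a b. x = a - b \<and> a \<in> set_diff (Vsp sle) (Vsp sle) \<inter> Vsp sle
        \<and> b \<in> set_diff (Vsp sle) (Vsp sle) \<inter> Vsp sle"
      using Vsp_subset_Vsp_diff by blast
  qed
  show "solid (set_diff (Vsp sle) (Vsp sle))"
    unfolding solid_def using Vsp_subset_Vsp_diff mem_Vsp_iff by blast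
qed

end

theorem theorem4p18:
  fixes le sle :: "'a::real_vector \<Rightarrow> 'a \<Rightarrow> bool"
  assumes "mixed_lattice_vs le sle"
    and "quasi_regular le sle"
  defines "R \<equiv> regular_quasi_ideals le sle"
  shows "(\<forall>A \<in> R. \<forall>B \<in> R.
            set_sum A B \<in> R \<and> A \<subseteq> set_sum A B \<and> B \<subseteq> set_sum A B
            \<and> (\<forall>C \<in> R. A \<subseteq> C \<and> B \<subseteq> C \<longrightarrow> set_sum A B \<subseteq> C))
     \<and> (\<forall>A \<in> R. \<forall>B \<in> R.
            A \<inter> B \<in> R \<and> A \<inter> B \<subseteq> A \<and> A \<inter> B \<subseteq> B
            \<and> (\<forall>C \<in> R. C \<subseteq> A \<and> C \<subseteq> B \<longrightarrow> C \<subseteq> A \<inter> B))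
     \<and> (\<forall>A \<in> R. \<forall>B \<in> R. \<forall>C \<in> R. A \<inter> set_sum B C = set_sum (A \<inter> B) (A \<inter> C))
     \<and> {0} \<in> R \<and> (\<forall>A \<in> R. {0} \<subseteq> A)
     \<and> set_diff (Vsp sle) (Vsp sle) \<in> R \<and> (\<forall>A \<in> R. A \<subseteq> set_diff (Vsp sle) (Vsp sle))"
proof -
  interpret quasi_regular_mixed_lattice_space le sle
    using assms(1,2) by unfold_locales
  have subspace: "subspace A" and below_top: "A \<subseteq> set_diff (Vsp sle) (Vsp sle)" if "A \<in> R" for A
    using that by (simp_all add: R_def regular_quasi_ideals_iff regular_subspace_subset_Vsp_diff)
  have "{0} \<subseteq> A" if "A \<in> R" for A
    using subspace[OF that] by (simp add: subspace_0)
  with subspace below_top show ?thesis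
    by (simp add: R_def set_sum_regular_quasi_ideal set_sum_upper1 set_sum_upper2 set_sum_least
        Int_regular_quasi_ideal regular_quasi_ideals_distrib
        zero_regular_quasi_ideal Vsp_diff_regular_quasi_ideal)
qed

end
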